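(* There exist an $\omega$-power-free infinite word $x$ over an infinite alphabet and a $k\in\mathbb{N}$ such that $\mathrm{AP}(x,k)$ is empty.
   Context: A factor is a contiguous subword; $u^\ell$ is $\ell$ concatenated copies of $u$. A word is $\omega$-power-free if for every finite (nonempty) factor $u$ there exists $\ell\in\mathbb{N}$ such that $u^\ell$ is not a factor. A $k$-anti-power is a word $w=w_1\cdots w_k$ with $|w_1|=\cdots=|w_k|$ and $w_1,\dots,w_k$ pairwise distinct. $\mathrm{AP}(x,k)$ is the set of $m\in\mathbb{N}=\{1,2,\dots\}$ such that the prefix of $x$ of length $km$ is a $k$-anti-power. *)

theory Defs
  imports Main
begin

definition factor :: "'a list \<Rightarrow> (nat \<Rightarrow> 'a) \<Rightarrow> bool" where
  "factor u x \<longleftrightarrow> (\<exists>i. \<forall>j<length u. x (i + j) = u ! j)"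

definition lpow :: "'a list \<Rightarrow> nat \<Rightarrow> 'a list" where
  "lpow u l = concat (replicate l u)"

definition omega_power_free :: "(nat \<Rightarrow> 'a) \<Rightarrow> bool" where
  "omega_power_free x \<longleftrightarrow>
     (\<forall>u. u \<noteq> [] \<and> factor u x \<longrightarrow> (\<exists>l::nat. l \<ge> 1 \<and> \<not> factor (lpow u l) x))"

definition anti_power :: "'a list \<Rightarrow> nat \<Rightarrow> bool" where
  "anti_power w k \<longleftrightarrow>
     (\<exists>m. length w = k * m \<and> distinct (map (\<lambda>i. take m (drop (i * m) w)) [0..<k]))"

definition wprefix :: "(nat \<Rightarrow> 'a) \<Rightarrow> nat \<Rightarrow> 'a list" where
  "wprefix x n = map x [0..<n]"

definition AP :: "(nat \<Rightarrow> 'a) \<Rightarrow> nat \<Rightarrow> nat set" where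
  "AP x k = {m. m \<ge> 1 \<and> anti_power (wprefix x (k * m)) k}"

end

theory Submission
  imports Defs "HOL-Library.Discrete_Functions"
begin

text \<open>Take \<open>x n = \<lfloor>log\<^sub>2 n\<rfloor>\<close> (\<open>floor_log\<close>) and \<open>k = 11\<close>.
Every letter occurs in \<open>x\<close> only finitely often, so a factor \<open>u\<close> cannot be
repeated past the last occurrence of its first letter: \<open>x\<close> is \<open>\<omega>\<close>-power-free.
For every block length \<open>m\<close>, with \<open>p = 2\<^bsup>\<lfloor>log\<^sub>2 m\<rfloor>\<^esup>\<close>, the dyadic interval
\<open>[8p, 16p)\<close> has length \<open>8p > 4m\<close> and starts before \<open>9m\<close>, so it contains two
consecutive aligned blocks \<open>[im, (i+1)m)\<close>, \<open>[(i+1)m, (i+2)m)\<close> with \<open>i + 1 < 11\<close>.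
On both blocks \<open>x\<close> is constant, so the prefix of length \<open>11m\<close> is no
\<open>11\<close>-anti-power.\<close>

lemma length_lpow [simp]: "length (lpow u l) = l * length u"
  unfolding lpow_def by (induction l) auto

lemma lpow_Suc_right: "lpow u (Suc l) = lpow u l @ u"
  unfolding lpow_def by (simp flip: replicate_append_same)

lemma omega_power_free_if_finite_occurrences:
  assumes finite_occ: "\<And>a. finite {n. x n = a}"
  shows "omega_power_free x"
  unfolding omega_power_free_def
proof (intro allI impI)
  fix u
  assume "u \<noteq> [] \<and> factor u x"
  then have u: "u \<noteq> []" by simp
  obtain N where N: "\<And>n. x n = u ! 0 \<Longrightarrow> n < N"
    using finite_occ[of "u ! 0"] by (auto simp: finite_nat_set_iff_bounded)
  show "\<exists>l\<ge>1. \<not> factor (lpow u l) x"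
  proof (intro exI conjI)
    show "\<not> factor (lpow u (Suc N)) x"
    proof
      assume "factor (lpow u (Suc N)) x"
      then obtain i where i: "\<And>j. j < Suc N * length u \<Longrightarrow> x (i + j) = lpow u (Suc N) ! j"
        unfolding factor_def by auto
      have "x (i + N * length u) = lpow u (Suc N) ! (N * length u)"
        using i u by simp
      also have "\<dots> = u ! 0"
        by (simp add: lpow_Suc_right nth_append)
      finally have "i + N * length u < N"
        by (rule N)
      moreover have "N \<le> N * length u"
        using u by (simp add: Suc_leI)
      ultimately show False
        by linarith
    qed
  qed simp
qed

lemma anti_power_wprefix_iff:
  "anti_power (wprefix x (k * m)) k \<longleftrightarrow> distinct (map (\<lambda>i. map x [i * m..<i * m + m]) [0..<k])"
proof (cases "k = 0")
  case True
  then show ?thesis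
    by (simp add: anti_power_def wprefix_def)
next
  case False
  let ?w = "wprefix x (k * m)"
  have "length ?w = k * m' \<longleftrightarrow> m' = m" for m'
    using False by (auto simp: wprefix_def)
  then have "anti_power ?w k \<longleftrightarrow> distinct (map (\<lambda>i. take m (drop (i * m) ?w)) [0..<k])"
    unfolding anti_power_def by simp
  also have "map (\<lambda>i. take m (drop (i * m) ?w)) [0..<k] = map (\<lambda>i. map x [i * m..<i * m + m]) [0..<k]"
  proof (rule map_cong)
    fix i
    assume "i \<in> set [0..<k]"
    then have "i * m + m \<le> k * m"
      using mult_le_mono1[of "Suc i" k m] by simp
    then show "take m (drop (i * m) ?w) = map x [i * m..<i * m + m]"
      unfolding wprefix_def by (simp add: drop_map take_map add.commute)
  qed simp
  finally show ?thesis .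
qed

lemma not_anti_power_wprefix_if_equal_blocks:
  assumes "i + 1 < k"
    and "map x [i * m..<i * m + m] = map x [(i + 1) * m..<(i + 1) * m + m]"
  shows "\<not> anti_power (wprefix x (k * m)) k"
proof -
  let ?blocks = "map (\<lambda>i. map x [i * m..<i * m + m]) [0..<k]"
  have "?blocks ! i = ?blocks ! (i + 1)"
    using assms by (simp del: upt_Suc)
  then have "\<not> distinct ?blocks"
    using assms(1) nth_eq_iff_index_eq[of ?blocks i "i + 1"] by (auto simp del: upt_Suc nth_map)
  then show ?thesis
    by (simp add: anti_power_wprefix_iff)
qed

lemma floor_log_constant_on_two_blocks:
  assumes "m \<ge> 1"
  obtains i where "i \<le> 9"
    and "\<And>n. i * m \<le> n \<Longrightarrow> n < (i + 2) * m \<Longrightarrow> floor_log n = floor_log m + 3"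
proof -
  define p :: nat where "p = 2 ^ floor_log m"
  have p_le: "p \<le> m" and p_gt: "m < 2 * p"
    using assms floor_log_exp2_le[of m] floor_log_exp2_gt[of m] by (simp_all add: p_def)
  define i where "i = 8 * p div m + 1"
  have "i * m = 8 * p div m * m + m"
    by (simp add: i_def)
  then have start: "8 * p < i * m" and stop: "i * m \<le> 8 * p + m"
    using assms div_mult_mod_eq[of "8 * p" m] mod_less_divisor[of m "8 * p"] by linarith+
  have "8 * p div m \<le> 8 * p div p"
    using p_le by (intro div_le_mono2) (simp_all add: p_def)
  also have "\<dots> = 8"
    by (simp add: p_def)
  finally have "i \<le> 9"
    by (simp add: i_def)
  moreover have "floor_log n = floor_log m + 3" if "i * m \<le> n" "n < (i + 2) * m" for n
  proof (rule floor_log_eqI)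
    show "0 < n" and "2 ^ (floor_log m + 3) \<le> n"
      using that start by (simp_all add: p_def power_add)
    show "n < 2 * 2 ^ (floor_log m + 3)"
      using that stop p_gt by (simp add: p_def power_add algebra_simps)
  qed
  ultimately show ?thesis
    by (rule that)
qed

lemma omega_power_free_floor_log: "omega_power_free floor_log"
proof (rule omega_power_free_if_finite_occurrences)
  fix a
  have "{n. floor_log n = a} \<subseteq> {..<2 * 2 ^ a}"
    using floor_log_exp2_gt by auto
  then show "finite {n. floor_log n = a}"
    using finite_subset by blast
qed

lemma AP_floor_log_11: "AP floor_log 11 = {}"
proof -
  have "\<not> anti_power (wprefix floor_log (11 * m)) 11" if "m \<ge> 1" for m
  proof -
    obtain i where "i \<le> 9"
      and const: "\<And>n. i * m \<le> n \<Longrightarrow> n < (i + 2) * m \<Longrightarrow> floor_log n = floor_log m + 3"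
      using floor_log_constant_on_two_blocks[OF \<open>m \<ge> 1\<close>] by metis
    have "map floor_log [i * m..<i * m + m] = map floor_log [(i + 1) * m..<(i + 1) * m + m]"
      by (rule nth_equalityI) (auto simp: const algebra_simps)
    then show ?thesis
      using \<open>i \<le> 9\<close> by (intro not_anti_power_wprefix_if_equal_blocks) simp_all
  qed
  then show ?thesis
    unfolding AP_def by auto
qed

theorem theorem3p7:
  shows "\<exists>(x :: nat \<Rightarrow> nat) (k :: nat). omega_power_free x \<and> k \<ge> 1 \<and> AP x k = {}"
proof (intro exI conjI)
  show "omega_power_free floor_log"
    by (rule omega_power_free_floor_log)
  show "AP floor_log 11 = {}"
    by (rule AP_floor_log_11)
qed simp

end
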